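(* For all types $A,B$, if $A\equiv B$ then $[\![A]\!]=[\![B]\!]$.
   Context: Terms: $t,s,u ::= x \mid \lambda x.t \mid ts \mid \langle t,s\rangle \mid \pi_1 t \mid \pi_2 t$ (up to $\alpha$-renaming). Top-level rules: $(\lambda x.t)s \mapsto t\{x:=s\}$; $\pi_i\langle t_1,t_2\rangle \mapsto t_i$ ($i=1,2$); $\langle t,s\rangle u \mapsto \langle tu, su\rangle$; $\pi_i(\lambda x.t)\mapsto \lambda x.\pi_i t$ ($i=1,2$); $\to_{\mathsf{dist}}$ is the closure of these rules under all term constructors. $\mathrm{SN}$ is the set of strongly normalizing terms for $\to_{\mathsf{dist}}$. Types: $A ::= \tau \mid A\Rightarrow A \mid A\wedge A$ with $\tau$ a single atomic type. The relation $\equiv$ on types is the smallest equivalence relation containing $A\Rightarrow (B\wedge C)\equiv (A\Rightarrow B)\wedge(A\Rightarrow C)$ for all $A,B,C$ and closed under congruence for $\Rightarrow$ and $\wedge$ in both arguments. Interpretation: $[\![\tau]\!]=\mathrm{SN}$; $[\![A\Rightarrow B]\!]=\{t\mid \forall s\in[\![A]\!],\ ts\in[\![B]\!]\}$; $[\![A\wedge B]\!]=\{t\mid \pi_1t\in[\![A]\!]\text{ and }\pi_2 t\in[\![B]\!]\}$. *)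

theory Defs
  imports Main
begin

(* Terms up to alpha-renaming, represented with de Bruijn indices. *)
datatype trm = Var nat | Lam trm | App trm trm | Pair trm trm | Pi1 trm | Pi2 trm

primrec lift :: "trm \<Rightarrow> nat \<Rightarrow> trm" where
  "lift (Var i) k = (if i < k then Var i else Var (Suc i))"
| "lift (Lam t) k = Lam (lift t (Suc k))"
| "lift (App t s) k = App (lift t k) (lift s k)"
| "lift (Pair t s) k = Pair (lift t k) (lift s k)"
| "lift (Pi1 t) k = Pi1 (lift t k)"
| "lift (Pi2 t) k = Pi2 (lift t k)"

primrec subst :: "trm \<Rightarrow> trm \<Rightarrow> nat \<Rightarrow> trm" where
  "subst (Var i) s k = (if k < i then Var (i - 1) else if i = k then s else Var i)"
| "subst (Lam t) s k = Lam (subst t (lift s 0) (Suc k))"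
| "subst (App t u) s k = App (subst t s k) (subst u s k)"
| "subst (Pair t u) s k = Pair (subst t s k) (subst u s k)"
| "subst (Pi1 t) s k = Pi1 (subst t s k)"
| "subst (Pi2 t) s k = Pi2 (subst t s k)"

inductive dist :: "trm \<Rightarrow> trm \<Rightarrow> bool" (infix "\<rightarrow>\<^sub>d" 50) where
  beta: "App (Lam t) s \<rightarrow>\<^sub>d subst t s 0"
| proj1: "Pi1 (Pair t1 t2) \<rightarrow>\<^sub>d t1"
| proj2: "Pi2 (Pair t1 t2) \<rightarrow>\<^sub>d t2"
| app_pair: "App (Pair t s) u \<rightarrow>\<^sub>d Pair (App t u) (App s u)"
| proj1_lam: "Pi1 (Lam t) \<rightarrow>\<^sub>d Lam (Pi1 t)"
| proj2_lam: "Pi2 (Lam t) \<rightarrow>\<^sub>d Lam (Pi2 t)"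
| lam: "t \<rightarrow>\<^sub>d t' \<Longrightarrow> Lam t \<rightarrow>\<^sub>d Lam t'"
| appL: "t \<rightarrow>\<^sub>d t' \<Longrightarrow> App t s \<rightarrow>\<^sub>d App t' s"
| appR: "s \<rightarrow>\<^sub>d s' \<Longrightarrow> App t s \<rightarrow>\<^sub>d App t s'"
| pairL: "t \<rightarrow>\<^sub>d t' \<Longrightarrow> Pair t s \<rightarrow>\<^sub>d Pair t' s"
| pairR: "s \<rightarrow>\<^sub>d s' \<Longrightarrow> Pair t s \<rightarrow>\<^sub>d Pair t s'"
| pi1: "t \<rightarrow>\<^sub>d t' \<Longrightarrow> Pi1 t \<rightarrow>\<^sub>d Pi1 t'"
| pi2: "t \<rightarrow>\<^sub>d t' \<Longrightarrow> Pi2 t \<rightarrow>\<^sub>d Pi2 t'"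

definition SN :: "trm set" where
  "SN = {t. Wellfounded.accp (\<lambda>y x. x \<rightarrow>\<^sub>d y) t}"

datatype ty = Atom | Fun ty ty | Conj ty ty

inductive typ_eq :: "ty \<Rightarrow> ty \<Rightarrow> bool" (infix "\<equiv>\<^sub>T" 50) where
  ax: "Fun A (Conj B C) \<equiv>\<^sub>T Conj (Fun A B) (Fun A C)"
| refl: "A \<equiv>\<^sub>T A"
| sym: "A \<equiv>\<^sub>T B \<Longrightarrow> B \<equiv>\<^sub>T A"
| trans: "A \<equiv>\<^sub>T B \<Longrightarrow> B \<equiv>\<^sub>T C \<Longrightarrow> A \<equiv>\<^sub>T C"
| cong_fun: "A \<equiv>\<^sub>T A' \<Longrightarrow> B \<equiv>\<^sub>T B' \<Longrightarrow> Fun A B \<equiv>\<^sub>T Fun A' B'"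
| cong_conj: "A \<equiv>\<^sub>T A' \<Longrightarrow> B \<equiv>\<^sub>T B' \<Longrightarrow> Conj A B \<equiv>\<^sub>T Conj A' B'"

primrec interp :: "ty \<Rightarrow> trm set" where
  "interp Atom = SN"
| "interp (Fun A B) = {t. \<forall>s \<in> interp A. App t s \<in> interp B}"
| "interp (Conj A B) = {t. Pi1 t \<in> interp A \<and> Pi2 t \<in> interp B}"

end

(* Every interpretation is a reducibility candidate: it consists of strongly normalising
   terms, is closed under reduction, and contains every neutral term (neither an abstraction
   nor a pair) all of whose one-step reducts it contains. The congruence cases are then
   trivial, and the distributivity axiom amounts to: for candidates X and Y,
   pi_i (t s) is in Y for all s in X iff (pi_i t) s is in Y for all s in X.
   Both terms are neutral, so each inclusion is proved by checking one-step reducts, by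
   induction on the strong normalisation of t and s; the critical reducts on either side are
   matched through pi_i (lam x. u) -> lam x. pi_i u and <a, b> s -> <a s, b s>, together
   with closure of candidates under expansion of beta- and projection redexes. *)

theory Submission
  imports Defs
begin

lemma SN_I: "(\<And>t'. t \<rightarrow>\<^sub>d t' \<Longrightarrow> t' \<in> SN) \<Longrightarrow> t \<in> SN"
  unfolding SN_def by (auto intro: accp.accI)

lemma SN_step: "t \<in> SN \<Longrightarrow> t \<rightarrow>\<^sub>d t' \<Longrightarrow> t' \<in> SN"
  unfolding SN_def by (auto intro: accp_downward)

lemma SN_induct [consumes 1, case_names step]:
  assumes "t \<in> SN"
    and "\<And>t. t \<in> SN \<Longrightarrow> (\<And>t'. t \<rightarrow>\<^sub>d t' \<Longrightarrow> P t') \<Longrightarrow> P t"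
  shows "P t"
proof -
  have "Wellfounded.accp (\<lambda>y x. x \<rightarrow>\<^sub>d y) t"
    using assms(1) by (simp add: SN_def)
  then show ?thesis
    by induction (auto intro: assms(2) simp: SN_def accp.accI)
qed

lemma SN_pair_induct [consumes 2, case_names step]:
  assumes "a \<in> SN" and "b \<in> SN"
    and "\<And>a b. a \<in> SN \<Longrightarrow> b \<in> SN \<Longrightarrow> (\<And>a'. a \<rightarrow>\<^sub>d a' \<Longrightarrow> P a' b)
           \<Longrightarrow> (\<And>b'. b \<rightarrow>\<^sub>d b' \<Longrightarrow> P a b') \<Longrightarrow> P a b"
  shows "P a b"
  using assms(1,2)
proof (induction a arbitrary: b rule: SN_induct)
  case (step a)
  note IH_a = step.IH and a_SN = step.hyps
  from step.prems show ?case
  proof (induction b rule: SN_induct)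
    case (step b)
    show ?case
      using assms(3) [OF a_SN step.hyps] IH_a step.IH SN_step step.hyps by blast
  qed
qed

lemma SN_reflect:
  assumes "\<And>a b. a \<rightarrow>\<^sub>d b \<Longrightarrow> f a \<rightarrow>\<^sub>d f b" and "f t \<in> SN"
  shows "t \<in> SN"
proof -
  have "u \<in> SN" if "f u \<in> SN" for u
    using that
  proof (induction "f u" arbitrary: u rule: SN_induct)
    case step
    then show ?case by (blast intro: SN_I assms(1))
  qed
  then show ?thesis using assms(2) .
qed

lemma Var_not_dist [simp]: "\<not> Var n \<rightarrow>\<^sub>d v"
  by (auto elim: dist.cases)

lemma Lam_distE:
  assumes "Lam t \<rightarrow>\<^sub>d v"
  obtains t' where "t \<rightarrow>\<^sub>d t'" and "v = Lam t'"
  using assms by cases auto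

lemma Pair_distE:
  assumes "Pair a b \<rightarrow>\<^sub>d v"
  obtains (left) a' where "a \<rightarrow>\<^sub>d a'" and "v = Pair a' b"
    | (right) b' where "b \<rightarrow>\<^sub>d b'" and "v = Pair a b'"
  using assms by cases auto

lemma App_distE:
  assumes "App t s \<rightarrow>\<^sub>d v"
  obtains (beta) u where "t = Lam u" and "v = subst u s 0"
    | (app_pair) a b where "t = Pair a b" and "v = Pair (App a s) (App b s)"
    | (appL) t' where "t \<rightarrow>\<^sub>d t'" and "v = App t' s"
    | (appR) s' where "s \<rightarrow>\<^sub>d s'" and "v = App t s'"
  using assms by cases auto

lemma lift_lift: "i < k + 1 \<Longrightarrow> lift (lift t i) (Suc k) = lift (lift t k) i"
  by (induct t arbitrary: i k) auto

lemma lift_subst [simp]: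
  "j < i + 1 \<Longrightarrow> lift (subst t s j) i = subst (lift t (i + 1)) (lift s i) j"
  by (induct t arbitrary: i j s) (simp_all add: diff_Suc lift_lift split: nat.split)

lemma lift_subst_lt:
  "i < j + 1 \<Longrightarrow> lift (subst t s j) i = subst (lift t i) (lift s i) (j + 1)"
  by (induct t arbitrary: i j s) (auto simp: lift_lift)

lemma subst_lift [simp]: "subst (lift t k) s k = t"
  by (induct t arbitrary: k s) simp_all

lemma subst_subst:
  "i < j + 1 \<Longrightarrow> subst (subst t (lift v i) (Suc j)) (subst u v j) i = subst (subst t u i) v j"
  by (induct t arbitrary: i j u v)
    (simp_all add: diff_Suc lift_lift [symmetric] lift_subst_lt split: nat.split)

lemma lift_preserves_dist: "r \<rightarrow>\<^sub>d s \<Longrightarrow> lift r i \<rightarrow>\<^sub>d lift s i"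
  by (induct arbitrary: i rule: dist.induct) (auto intro: dist.intros)

lemma subst_preserves_dist: "r \<rightarrow>\<^sub>d s \<Longrightarrow> subst r t i \<rightarrow>\<^sub>d subst s t i"
proof (induct arbitrary: t i rule: dist.induct)
  case (beta u s)
  have "subst (App (Lam u) s) t i \<rightarrow>\<^sub>d subst (subst u (lift t 0) (Suc i)) (subst s t i) 0"
    by (simp add: dist.beta)
  also have "subst (subst u (lift t 0) (Suc i)) (subst s t i) 0 = subst (subst u s 0) t i"
    using subst_subst [of 0 i u t s] by simp
  finally show ?case .
qed (auto intro: dist.intros)

lemma dist_steps_map:
  assumes "\<And>a b. a \<rightarrow>\<^sub>d b \<Longrightarrow> f a \<rightarrow>\<^sub>d f b" and "dist\<^sup>*\<^sup>* a b"
  shows "dist\<^sup>*\<^sup>* (f a) (f b)"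
  using assms(2) by induction (auto intro: rtranclp.rtrancl_into_rtrancl assms(1))

lemma subst_preserves_dist2: "r \<rightarrow>\<^sub>d s \<Longrightarrow> dist\<^sup>*\<^sup>* (subst t r i) (subst t s i)"
proof (induct t arbitrary: r s i)
  case (Lam t)
  then show ?case
    by (simp add: dist_steps_map [of Lam] dist.lam lift_preserves_dist)
next
  case (App t u)
  then show ?case
    using dist_steps_map [of "\<lambda>x. App x _"] dist_steps_map [of "App _"]
    by simp (meson dist.appL dist.appR rtranclp_trans)
next
  case (Pair t u)
  then show ?case
    using dist_steps_map [of "\<lambda>x. Pair x _"] dist_steps_map [of "Pair _"]
    by simp (meson dist.pairL dist.pairR rtranclp_trans)
qed (auto intro: dist_steps_map dist.pi1 dist.pi2)

lemma SN_of_SN_subst: "subst t s k \<in> SN \<Longrightarrow> t \<in> SN"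
  by (rule SN_reflect [of "\<lambda>t. subst t s k"]) (auto intro: subst_preserves_dist)

(* proj True and proj False are the two projections, so that symmetric cases share one proof. *)
definition proj :: "bool \<Rightarrow> trm \<Rightarrow> trm" where
  "proj i = (if i then Pi1 else Pi2)"

lemma proj_Pair: "proj i (Pair a b) \<rightarrow>\<^sub>d (if i then a else b)"
  by (simp add: proj_def dist.proj1 dist.proj2)

lemma proj_Lam: "proj i (Lam t) \<rightarrow>\<^sub>d Lam (proj i t)"
  by (simp add: proj_def dist.proj1_lam dist.proj2_lam)

lemma proj_cong: "t \<rightarrow>\<^sub>d t' \<Longrightarrow> proj i t \<rightarrow>\<^sub>d proj i t'"
  by (simp add: proj_def dist.pi1 dist.pi2)

lemma proj_neq [simp]: "proj i t \<noteq> Lam u" "proj i t \<noteq> Pair a b"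
  by (simp_all add: proj_def)

lemma subst_proj [simp]: "subst (proj i t) s k = proj i (subst t s k)"
  by (simp add: proj_def)

lemma proj_distE:
  assumes "proj i t \<rightarrow>\<^sub>d v"
  obtains (proj) a b where "t = Pair a b" and "v = (if i then a else b)"
    | (proj_lam) u where "t = Lam u" and "v = Lam (proj i u)"
    | (cong) t' where "t \<rightarrow>\<^sub>d t'" and "v = proj i t'"
  using assms by (cases i) (auto simp: proj_def elim: dist.cases)

fun neutral :: "trm \<Rightarrow> bool" where
  "neutral (Lam t) = False"
| "neutral (Pair t s) = False"
| "neutral t = True"

lemma neutral_proj [simp]: "neutral (proj i t)"
  by (simp add: proj_def)

definition candidate :: "trm set \<Rightarrow> bool" where
  "candidate X \<longleftrightarrow> X \<subseteq> SN \<and> (\<forall>t t'. t \<in> X \<longrightarrow> t \<rightarrow>\<^sub>d t' \<longrightarrow> t' \<in> X)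
     \<and> (\<forall>t. neutral t \<longrightarrow> (\<forall>t'. t \<rightarrow>\<^sub>d t' \<longrightarrow> t' \<in> X) \<longrightarrow> t \<in> X)"

lemma candidateI:
  assumes "X \<subseteq> SN" and "\<And>t t'. t \<in> X \<Longrightarrow> t \<rightarrow>\<^sub>d t' \<Longrightarrow> t' \<in> X"
    and "\<And>t. neutral t \<Longrightarrow> (\<And>t'. t \<rightarrow>\<^sub>d t' \<Longrightarrow> t' \<in> X) \<Longrightarrow> t \<in> X"
  shows "candidate X"
  using assms unfolding candidate_def by blast

lemma candidate_SN: "candidate X \<Longrightarrow> t \<in> X \<Longrightarrow> t \<in> SN"
  unfolding candidate_def by blast

lemma candidate_step: "candidate X \<Longrightarrow> t \<in> X \<Longrightarrow> t \<rightarrow>\<^sub>d t' \<Longrightarrow> t' \<in> X"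
  unfolding candidate_def by blast

lemma candidate_steps:
  assumes "candidate X" and "t \<in> X" and "dist\<^sup>*\<^sup>* t t'"
  shows "t' \<in> X"
  using assms(3,2) by induction (use assms(1) candidate_step in blast)+

lemma candidate_neutral:
  "candidate X \<Longrightarrow> neutral t \<Longrightarrow> (\<And>t'. t \<rightarrow>\<^sub>d t' \<Longrightarrow> t' \<in> X) \<Longrightarrow> t \<in> X"
  unfolding candidate_def by blast

lemma candidate_Var: "candidate X \<Longrightarrow> Var n \<in> X"
  by (rule candidate_neutral) auto

lemma candidate_SN_set: "candidate SN"
  by (rule candidateI) (auto intro: SN_step SN_I)

lemma candidate_Fun:
  assumes X: "candidate X" and Y: "candidate Y"
  shows "candidate {t. \<forall>s\<in>X. App t s \<in> Y}"
proof (rule candidateI)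
  show "{t. \<forall>s\<in>X. App t s \<in> Y} \<subseteq> SN"
  proof
    fix t assume "t \<in> {t. \<forall>s\<in>X. App t s \<in> Y}"
    then have "App t (Var 0) \<in> SN"
      using candidate_Var [OF X] candidate_SN [OF Y] by blast
    then show "t \<in> SN" by (rule SN_reflect [rotated]) (rule dist.appL)
  qed
next
  fix t t' assume "t \<in> {t. \<forall>s\<in>X. App t s \<in> Y}" and "t \<rightarrow>\<^sub>d t'"
  then show "t' \<in> {t. \<forall>s\<in>X. App t s \<in> Y}"
    using candidate_step [OF Y] by (blast intro: dist.appL)
next
  fix t assume "neutral t" and reducts: "\<And>t'. t \<rightarrow>\<^sub>d t' \<Longrightarrow> t' \<in> {t. \<forall>s\<in>X. App t s \<in> Y}"
  have "App t s \<in> Y" if "s \<in> X" for s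
  proof -
    have "s \<in> SN" using candidate_SN [OF X that] .
    then show ?thesis using that
    proof (induction rule: SN_induct)
      case (step s)
      show ?case
      proof (rule candidate_neutral [OF Y])
        fix v assume "App t s \<rightarrow>\<^sub>d v"
        then show "v \<in> Y"
        proof (cases rule: App_distE)
          case (appL t')
          then show ?thesis using reducts step.prems by blast
        next
          case (appR s')
          then show ?thesis using step.IH step.prems candidate_step [OF X] by blast
        qed (use \<open>neutral t\<close> in auto)
      qed simp
    qed
  qed
  then show "t \<in> {t. \<forall>s\<in>X. App t s \<in> Y}" by blast
qed

lemma candidate_Conj:
  assumes X: "candidate X" and Y: "candidate Y"
  shows "candidate {t. \<forall>i. proj i t \<in> (if i then X else Y)}"
proof (rule candidateI)
  show "{t. \<forall>i. proj i t \<in> (if i then X else Y)} \<subseteq> SN"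
  proof
    fix t assume "t \<in> {t. \<forall>i. proj i t \<in> (if i then X else Y)}"
    then have "proj True t \<in> X" by (simp add: all_bool_eq)
    then have "proj True t \<in> SN" by (rule candidate_SN [OF X])
    then show "t \<in> SN" by (rule SN_reflect [rotated]) (rule proj_cong)
  qed
next
  fix t t' assume "t \<in> {t. \<forall>i. proj i t \<in> (if i then X else Y)}" and "t \<rightarrow>\<^sub>d t'"
  then show "t' \<in> {t. \<forall>i. proj i t \<in> (if i then X else Y)}"
    using candidate_step [OF X] candidate_step [OF Y] proj_cong by (simp split: if_splits) blast
next
  fix t assume "neutral t"
    and reducts: "\<And>t'. t \<rightarrow>\<^sub>d t' \<Longrightarrow> t' \<in> {t. \<forall>i. proj i t \<in> (if i then X else Y)}"
  have "proj i t \<in> (if i then X else Y)" for i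
  proof (rule candidate_neutral)
    show "candidate (if i then X else Y)" using X Y by simp
  next
    fix v assume "proj i t \<rightarrow>\<^sub>d v"
    then show "v \<in> (if i then X else Y)"
      by (cases rule: proj_distE) (use \<open>neutral t\<close> reducts in auto)
  qed simp
  then show "t \<in> {t. \<forall>i. proj i t \<in> (if i then X else Y)}" by blast
qed

lemma candidate_interp: "candidate (interp A)"
proof (induction A)
  case (Conj A B)
  have "interp (Conj A B) = {t. \<forall>i. proj i t \<in> (if i then interp A else interp B)}"
    by (auto simp: proj_def)
  then show ?case using candidate_Conj [OF Conj] by simp
qed (simp_all add: candidate_SN_set candidate_Fun)

lemma candidate_beta_expand:
  assumes X: "candidate X" and "t \<in> SN" and "s \<in> SN" and "subst t s 0 \<in> X"
  shows "App (Lam t) s \<in> X"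
  using assms(2-4)
proof (induction t s rule: SN_pair_induct)
  case (step t s)
  show ?case
  proof (rule candidate_neutral [OF X])
    fix v assume "App (Lam t) s \<rightarrow>\<^sub>d v"
    then show "v \<in> X"
    proof (cases rule: App_distE)
      case beta
      then show ?thesis using step.prems by simp
    next
      case (appL t')
      then obtain u where "t \<rightarrow>\<^sub>d u" and "v = App (Lam u) s"
        by (auto elim: Lam_distE)
      moreover have "subst u s 0 \<in> X"
        using candidate_step [OF X step.prems subst_preserves_dist [OF \<open>t \<rightarrow>\<^sub>d u\<close>]] .
      ultimately show ?thesis using step.IH(1) by blast
    next
      case (appR s')
      moreover have "subst t s' 0 \<in> X"
        using candidate_steps [OF X step.prems subst_preserves_dist2 [OF \<open>s \<rightarrow>\<^sub>d s'\<close>]] .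
      ultimately show ?thesis using step.IH(2) by blast
    qed simp
  qed simp
qed

lemma candidate_proj_Pair_expand:
  assumes X: "candidate X" and "a \<in> SN" and "b \<in> SN" and "(if i then a else b) \<in> X"
  shows "proj i (Pair a b) \<in> X"
  using assms(2-4)
proof (induction a b rule: SN_pair_induct)
  case (step a b)
  show ?case
  proof (rule candidate_neutral [OF X])
    fix v assume "proj i (Pair a b) \<rightarrow>\<^sub>d v"
    then show "v \<in> X"
    proof (cases rule: proj_distE)
      case proj
      then show ?thesis using step.prems by auto
    next
      case (cong r)
      from \<open>Pair a b \<rightarrow>\<^sub>d r\<close> show ?thesis
      proof (cases rule: Pair_distE)
        case (left a')
        then show ?thesis
          using cong step.IH(1) step.prems candidate_step [OF X] by (cases i) auto
      next
        case (right b')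
        then show ?thesis
          using cong step.IH(2) step.prems candidate_step [OF X] by (cases i) auto
      qed
    qed simp
  qed simp
qed

lemma candidate_App_proj:
  assumes X: "candidate X" and Y: "candidate Y"
    and "\<forall>s\<in>X. proj i (App t s) \<in> Y" and "s \<in> X"
  shows "App (proj i t) s \<in> Y"
proof -
  have "proj i (App t (Var 0)) \<in> SN"
    using assms(3) candidate_Var [OF X] candidate_SN [OF Y] by blast
  then have "t \<in> SN"
    by (rule SN_reflect [rotated]) (intro proj_cong dist.appL)
  moreover have "s \<in> SN" using candidate_SN [OF X \<open>s \<in> X\<close>] .
  ultimately show ?thesis using assms(3,4)
  proof (induction t s rule: SN_pair_induct)
    case (step t s)
    have in_Y: "proj i (App t s) \<in> Y" using step.prems by blast
    show ?case
    proof (rule candidate_neutral [OF Y])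
      fix v assume "App (proj i t) s \<rightarrow>\<^sub>d v"
      then show "v \<in> Y"
      proof (cases rule: App_distE)
        case (appL r)
        from \<open>proj i t \<rightarrow>\<^sub>d r\<close> show ?thesis
        proof (cases rule: proj_distE)
          case (proj a b)
          have "proj i (App t s) \<rightarrow>\<^sub>d proj i (Pair (App a s) (App b s))"
            using proj by (simp add: proj_cong dist.app_pair)
          moreover have "proj i (Pair (App a s) (App b s)) \<rightarrow>\<^sub>d v"
            using proj_Pair [of i "App a s" "App b s"] proj appL by (cases i) simp_all
          ultimately show ?thesis using in_Y candidate_step [OF Y] by blast
        next
          case (proj_lam u)
          have "proj i (App t s) \<rightarrow>\<^sub>d subst (proj i u) s 0"
            using proj_lam by (simp add: proj_cong dist.beta)
          then have "subst (proj i u) s 0 \<in> Y" using in_Y candidate_step [OF Y] by blast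
          moreover from this have "proj i u \<in> SN" by (blast intro: SN_of_SN_subst candidate_SN [OF Y])
          ultimately show ?thesis
            using candidate_beta_expand [OF Y] step.hyps appL proj_lam by simp
        next
          case (cong t')
          have "\<forall>s\<in>X. proj i (App t' s) \<in> Y"
            using step.prems \<open>t \<rightarrow>\<^sub>d t'\<close> candidate_step [OF Y] by (blast intro: proj_cong dist.appL)
          then show ?thesis using step.IH(1) step.prems cong appL by blast
        qed
      next
        case (appR s')
        then show ?thesis using step.IH(2) step.prems candidate_step [OF X] by blast
      qed simp_all
    qed simp
  qed
qed

lemma candidate_proj_App:
  assumes X: "candidate X" and Y: "candidate Y"
    and "\<forall>s\<in>X. App (proj i t) s \<in> Y" and "\<forall>s\<in>X. App (proj (\<not> i) t) s \<in> SN"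
    and "s \<in> X"
  shows "proj i (App t s) \<in> Y"
proof -
  have "App (proj i t) (Var 0) \<in> SN"
    using assms(3) candidate_Var [OF X] candidate_SN [OF Y] by blast
  then have "t \<in> SN"
    by (rule SN_reflect [rotated]) (intro proj_cong dist.appL)
  moreover have "s \<in> SN" using candidate_SN [OF X \<open>s \<in> X\<close>] .
  ultimately show ?thesis using assms(3-5)
  proof (induction t s rule: SN_pair_induct)
    case (step t s)
    have in_Y: "App (proj i t) s \<in> Y" and in_SN: "App (proj (\<not> i) t) s \<in> SN"
      using step.prems by blast+
    show ?case
    proof (rule candidate_neutral [OF Y])
      fix v assume "proj i (App t s) \<rightarrow>\<^sub>d v"
      then obtain r where "App t s \<rightarrow>\<^sub>d r" and v: "v = proj i r"
        by (cases rule: proj_distE) auto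
      from \<open>App t s \<rightarrow>\<^sub>d r\<close> show "v \<in> Y"
      proof (cases rule: App_distE)
        case (beta u)
        have "App (proj i t) s \<rightarrow>\<^sub>d App (Lam (proj i u)) s"
          using beta by (simp add: proj_Lam dist.appL)
        then have "App (Lam (proj i u)) s \<in> Y" using in_Y candidate_step [OF Y] by blast
        then have "subst (proj i u) s 0 \<in> Y" using candidate_step [OF Y] dist.beta by blast
        then show ?thesis using beta v by simp
      next
        case (app_pair a b)
        have "App (proj j t) s \<rightarrow>\<^sub>d App (if j then a else b) s" for j
          using app_pair by (simp add: proj_Pair dist.appL)
        then have "App (if i then a else b) s \<in> Y" and "App (if \<not> i then a else b) s \<in> SN"
          using in_Y in_SN candidate_step [OF Y] SN_step by blast+
        then have "App a s \<in> SN" and "App b s \<in> SN" and "(if i then App a s else App b s) \<in> Y"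
          using candidate_SN [OF Y] by (cases i; simp)+
        then show ?thesis
          using candidate_proj_Pair_expand [OF Y] app_pair v by blast
      next
        case (appL t')
        have "\<forall>s\<in>X. App (proj i t') s \<in> Y" "\<forall>s\<in>X. App (proj (\<not> i) t') s \<in> SN"
          using step.prems \<open>t \<rightarrow>\<^sub>d t'\<close> candidate_step [OF Y] SN_step
          by (blast intro: proj_cong dist.appL)+
        then show ?thesis using step.IH(1) step.prems(3) appL v by blast
      next
        case (appR s')
        then show ?thesis using step.IH(2) step.prems v candidate_step [OF X] by blast
      qed
    qed simp
  qed
qed

lemma interp_Fun_Conj: "interp (Fun A (Conj B C)) = interp (Conj (Fun A B) (Fun A C))"
proof (intro set_eqI iffI)
  fix t assume "t \<in> interp (Fun A (Conj B C))"
  then have "\<forall>s\<in>interp A. proj i (App t s) \<in> interp (if i then B else C)" for i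
    by (auto simp: proj_def)
  then have "\<forall>s\<in>interp A. App (proj i t) s \<in> interp (if i then B else C)" for i
    using candidate_App_proj candidate_interp by blast
  from this [of True] this [of False] show "t \<in> interp (Conj (Fun A B) (Fun A C))"
    by (simp add: proj_def)
next
  fix t assume "t \<in> interp (Conj (Fun A B) (Fun A C))"
  then have "\<forall>s\<in>interp A. App (proj i t) s \<in> interp (if i then B else C)" for i
    by (auto simp: proj_def)
  then have "\<forall>s\<in>interp A. proj i (App t s) \<in> interp (if i then B else C)" for i
    using candidate_proj_App [OF candidate_interp candidate_interp] candidate_SN [OF candidate_interp]
    by blast
  from this [of True] this [of False] show "t \<in> interp (Fun A (Conj B C))"
    by (simp add: proj_def)
qed

theorem lemma7:
  fixes A B :: ty
  assumes "A \<equiv>\<^sub>T B"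
  shows "interp A = interp B"
  using assms
proof induction
  case ax
  show ?case by (rule interp_Fun_Conj)
qed simp_all

end
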